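(* Let $\bar w=\{w_1,\dots,w_N\}$ be a set of complex numbers and let $\mathcal F(\bar z)$ be a symmetric function of $n\le N$ variables $z_1,\dots,z_n$, holomorphic in each $z_j$ in a domain containing the points $\bar w$. Define $$\langle\mathcal F\rangle=\frac{1}{(2\pi i c)^n n!}\oint_{\bar w}\frac{g(\bar z,\bar w)\,d\bar z}{\Delta_n(\bar z)\Delta'_n(\bar z)}\mathcal F(\bar z),$$ where $d\bar z=dz_1\cdots dz_n$ and the contour for each $z_j$ encircles the points $\bar w$ anticlockwise and contains no other singularities of the integrand. Then $$\langle\mathcal F\rangle=\sum g(\bar w_{\rm I},\bar w_{\rm II})\,\mathcal F(\bar w_{\rm I}),$$ the sum being over partitions $\bar w\Rightarrow\{\bar w_{\rm I},\bar w_{\rm II}\}$ with $\#\bar w_{\rm I}=n$.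
   Context: Fix $c\neq0$ and $g(u,v)=\frac{c}{u-v}$. For sets, $g(\bar z,\bar w)=\prod_{z_j\in\bar z}\prod_{w_k\in\bar w}g(z_j,w_k)$ (empty product $=1$). $\Delta'_n(\bar z)=\prod_{j<k}g(z_j,z_k)$, $\Delta_n(\bar z)=\prod_{j>k}g(z_j,z_k)$. *)

theory Defs
  imports "HOL-Complex_Analysis.Complex_Analysis"
begin

definition gfun :: "complex \<Rightarrow> complex \<Rightarrow> complex \<Rightarrow> complex" where
  "gfun c u v = c / (u - v)"

definition gset :: "complex \<Rightarrow> complex set \<Rightarrow> complex set \<Rightarrow> complex" where
  "gset c A B = (\<Prod>a\<in>A. \<Prod>b\<in>B. gfun c a b)"

definition glist :: "complex \<Rightarrow> complex list \<Rightarrow> complex set \<Rightarrow> complex" where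
  "glist c zs B = (\<Prod>j<length zs. \<Prod>b\<in>B. gfun c (zs ! j) b)"

definition Delta' :: "complex \<Rightarrow> complex list \<Rightarrow> complex" where
  "Delta' c zs = (\<Prod>(j,k)\<in>{(j,k). j < k \<and> k < length zs}. gfun c (zs ! j) (zs ! k))"

definition Delta :: "complex \<Rightarrow> complex list \<Rightarrow> complex" where
  "Delta c zs = (\<Prod>(j,k)\<in>{(j,k). k < j \<and> j < length zs}. gfun c (zs ! j) (zs ! k))"

text \<open>Iterated contour integral over n variables z_0..z_{n-1}; variable j runs over
  the closed path gam j.  The last variable is integrated outermost.\<close>
fun cint_iter :: "(nat \<Rightarrow> real \<Rightarrow> complex) \<Rightarrow> nat \<Rightarrow> (complex list \<Rightarrow> complex) \<Rightarrow> complex" where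
  "cint_iter gam 0 f = f []"
| "cint_iter gam (Suc k) f =
     contour_integral (gam k) (\<lambda>x. cint_iter gam k (\<lambda>xs. f (xs @ [x])))"

definition bracket :: "complex \<Rightarrow> complex set \<Rightarrow> nat \<Rightarrow> (nat \<Rightarrow> real \<Rightarrow> complex)
    \<Rightarrow> (complex list \<Rightarrow> complex) \<Rightarrow> complex" where
  "bracket c W n gam F =
     1 / ((2 * pi * \<i> * c) ^ n * of_nat (fact n)) *
     cint_iter gam n (\<lambda>zs. glist c zs W / (Delta c zs * Delta' c zs) * F zs)"

end

theory Submission
  imports Defs "HOL-Combinatorics.Multiset_Permutations"
begin

text \<open>
  The factor \<open>1 / (\<Delta>\<^sub>n \<Delta>'\<^sub>n) = \<Prod>\<^bsub>j \<noteq> k\<^esub> (z\<^sub>j - z\<^sub>k) / c\<close> is a polynomial, so the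
  only singularities of the integrand are the simple poles of \<open>g(z\<^sub>j, W)\<close> at the points of \<open>W\<close>.
  Integrating out one variable at a time with the residue theorem turns the integral into
  \<open>(2\<pi>i)\<^sup>n\<close> times a sum over all \<open>n\<close>-tuples of points of \<open>W\<close>, the variable \<open>z\<^sub>j = w\<close>
  contributing the residue \<open>c g(w, W - {w})\<close>. The polynomial factor kills the tuples with a
  repeated point; for a tuple of distinct points forming the set \<open>I\<close> it combines with the
  residues to \<open>c\<^sup>n g(I, W - I)\<close>, and by symmetry of \<open>F\<close> the \<open>n!\<close> orderings of \<open>I\<close>
  contribute equally.
\<close>

lemma gfun_eq_0_iff: "c \<noteq> 0 \<Longrightarrow> gfun c a b = 0 \<longleftrightarrow> a = b"
  by (simp add: gfun_def)

lemma gset_singleton [simp]: "gset c {a} B = (\<Prod>b\<in>B. gfun c a b)"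
  by (simp add: gset_def)

lemma glist_Nil [simp]: "glist c [] W = 1"
  by (simp add: glist_def)

lemma glist_snoc: "glist c (xs @ [x]) W = glist c xs W * gset c {x} W"
  by (simp add: glist_def nth_append)

lemma prod_nth_distinct:
  assumes "distinct xs"
  shows "(\<Prod>j<length xs. f (xs ! j)) = (\<Prod>a\<in>set xs. f a)"
proof -
  have "bij_betw (\<lambda>j. xs ! j) {..<length xs} (set xs)"
    using assms by (auto simp: bij_betw_def inj_on_def nth_eq_iff_index_eq in_set_conv_nth)
  then show ?thesis
    by (rule prod.reindex_bij_betw)
qed

lemma Delta_mult_Delta':
  "Delta c zs * Delta' c zs =
     (\<Prod>(j, k) \<in> {(j, k). j < length zs \<and> k < length zs \<and> j \<noteq> k}. gfun c (zs ! j) (zs ! k))"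
proof -
  let ?L = "{(j, k). k < j \<and> j < length zs}" and ?U = "{(j, k). j < k \<and> k < length zs}"
  have "finite ?L" "finite ?U"
    by (rule finite_subset[of _ "{..<length zs} \<times> {..<length zs}"]; auto)+
  moreover have pairs: "{(j, k). j < length zs \<and> k < length zs \<and> j \<noteq> k} = ?L \<union> ?U"
    by auto
  ultimately show ?thesis
    unfolding Delta_def Delta'_def pairs by (intro prod.union_disjoint[symmetric]) auto
qed

lemma Delta_mult_Delta'_eq_0_iff:
  assumes "c \<noteq> 0"
  shows "Delta c zs * Delta' c zs = 0 \<longleftrightarrow> \<not> distinct zs"
proof -
  have "finite {(j, k). j < length zs \<and> k < length zs \<and> j \<noteq> k}"
    by (rule finite_subset[of _ "{..<length zs} \<times> {..<length zs}"]) auto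
  then show ?thesis
    unfolding Delta_mult_Delta' distinct_conv_nth using assms
    by (auto simp: gfun_eq_0_iff)
qed

lemma Delta_mult_Delta'_distinct:
  assumes "distinct zs"
  shows "Delta c zs * Delta' c zs = (\<Prod>a\<in>set zs. gset c {a} (set zs - {a}))"
proof -
  let ?P = "{(j, k). j < length zs \<and> k < length zs \<and> j \<noteq> k}"
  have "inj_on (\<lambda>(j, k). (zs ! j, zs ! k)) ?P"
    using assms by (auto simp: inj_on_def nth_eq_iff_index_eq)
  moreover have "(\<lambda>(j, k). (zs ! j, zs ! k)) ` ?P = (SIGMA a:set zs. set zs - {a})"
    using assms by (force simp: in_set_conv_nth nth_eq_iff_index_eq)
  ultimately have "bij_betw (\<lambda>(j, k). (zs ! j, zs ! k)) ?P (SIGMA a:set zs. set zs - {a})"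
    by (simp add: bij_betw_def)
  from prod.reindex_bij_betw[OF this, of "\<lambda>(a, b). gfun c a b"]
  have "(\<Prod>(j, k)\<in>?P. gfun c (zs ! j) (zs ! k)) =
      (\<Prod>(a, b)\<in>(SIGMA a:set zs. set zs - {a}). gfun c a b)"
    by (simp add: case_prod_unfold)
  then show ?thesis
    by (simp add: Delta_mult_Delta' prod.Sigma)
qed

lemma holomorphic_on_inverse_Delta_mult_Delta':
  assumes "l < length zs"
  shows "(\<lambda>y. inverse (Delta c (zs[l := y]) * Delta' c (zs[l := y]))) holomorphic_on S"
proof -
  have "inverse (Delta c xs * Delta' c xs) =
      (\<Prod>(j, k) \<in> {(j, k). j < length xs \<and> k < length xs \<and> j \<noteq> k}. (xs ! j - xs ! k) / c)"
    for xs
    \<comment> \<open>also for coinciding points, where both sides are \<open>0\<close> since \<open>inverse (c / 0) = 0\<close>\<close>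
    unfolding Delta_mult_Delta' prod_inversef[symmetric]
    by (intro prod.cong) (auto simp: gfun_def)
  moreover have "(\<lambda>y. zs[l := y] ! j) holomorphic_on S" for j
    using assms by (cases "l = j") (auto simp: nth_list_update)
  ultimately show ?thesis
    by (auto intro!: holomorphic_intros split: prod.splits)
qed

lemma prod_residues_distinct:
  assumes "finite W" "distinct xs" "set xs \<subseteq> W"
  shows "(\<Prod>j<length xs. c * gset c {xs ! j} (W - {xs ! j})) =
    c ^ length xs * gset c (set xs) (W - set xs) * (Delta c xs * Delta' c xs)"
proof -
  let ?I = "set xs"
  have split: "gset c {a} (W - {a}) = gset c {a} (W - ?I) * gset c {a} (?I - {a})" if "a \<in> ?I" for a
  proof -
    have decomp: "W - {a} = (W - ?I) \<union> (?I - {a})"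
      using that assms(3) by auto
    show ?thesis
      unfolding gset_singleton decomp by (subst prod.union_disjoint) (use assms(1) in auto)
  qed
  have "(\<Prod>j<length xs. c * gset c {xs ! j} (W - {xs ! j})) = (\<Prod>a\<in>?I. c * gset c {a} (W - {a}))"
    by (rule prod_nth_distinct[OF assms(2)])
  also have "\<dots> = (\<Prod>a\<in>?I. c * gset c {a} (W - ?I) * gset c {a} (?I - {a}))"
    by (intro prod.cong refl) (simp only: split mult.assoc)
  also have "\<dots> = c ^ length xs * gset c ?I (W - ?I) * (Delta c xs * Delta' c xs)"
    by (simp add: prod.distrib gset_def Delta_mult_Delta'_distinct[OF assms(2)] distinct_card[OF assms(2)])
  finally show ?thesis .
qed

lemma prod_residues_mult_inverse_Delta_mult_Delta':
  assumes "c \<noteq> 0" "finite W" "set xs \<subseteq> W"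
  shows "(\<Prod>j<length xs. c * gset c {xs ! j} (W - {xs ! j})) * inverse (Delta c xs * Delta' c xs) =
    (if distinct xs then c ^ length xs * gset c (set xs) (W - set xs) else 0)"
proof (cases "distinct xs")
  case True
  then have "Delta c xs * Delta' c xs \<noteq> 0"
    using Delta_mult_Delta'_eq_0_iff[OF assms(1)] by blast
  then show ?thesis
    unfolding prod_residues_distinct[OF assms(2) True assms(3)] using True by (simp add: field_simps)
next
  case False
  then have "Delta c xs * Delta' c xs = 0"
    using Delta_mult_Delta'_eq_0_iff[OF assms(1)] by blast
  then show ?thesis
    using False by (simp only: inverse_zero mult_zero_right if_False)
qed

lemma has_contour_integral_gset_simple_poles:
  assumes "open S" "connected S" "finite W" "W \<subseteq> S" "f holomorphic_on S"
    and "valid_path \<gamma>" "pathfinish \<gamma> = pathstart \<gamma>" "path_image \<gamma> \<subseteq> S - W"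
    and "\<forall>z. z \<notin> S \<longrightarrow> winding_number \<gamma> z = 0"
  shows "((\<lambda>z. gset c {z} W * f z) has_contour_integral
            2 * pi * \<i> * (\<Sum>w\<in>W. winding_number \<gamma> w * (c * gset c {w} (W - {w}) * f w))) \<gamma>"
proof -
  define h where "h = (\<lambda>z. gset c {z} W * f z)"
  have holo: "(\<lambda>z. gset c {z} V * f z) holomorphic_on S - V" if "V \<subseteq> W" for V
    unfolding gset_singleton gfun_def using assms(3) that
    by (intro holomorphic_intros holomorphic_on_prod holomorphic_on_subset[OF assms(5)])
      (auto dest: finite_subset)
  have open_minus: "open (S - V)" if "V \<subseteq> W" for V
    using assms(1,3) that by (simp add: open_Diff finite_imp_closed finite_subset)
  have residue: "residue h w = c * gset c {w} (W - {w}) * f w" if "w \<in> W" for w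
  proof -
    have "h = (\<lambda>z. c * (gset c {z} (W - {w}) * f z) / (z - w))"
      using assms(3) that by (auto simp: h_def prod.remove[of W w] gfun_def)
    moreover have "(\<lambda>z. c * (gset c {z} (W - {w}) * f z)) holomorphic_on S - (W - {w})"
      using holo[of "W - {w}"] by (auto intro: holomorphic_intros)
    ultimately show ?thesis
      using residue_simple[OF open_minus[of "W - {w}"]] that assms(4) by (auto simp: mult.assoc)
  qed
  have integrable: "h contour_integrable_on \<gamma>"
    using contour_integrable_holomorphic_simple[OF holo open_minus assms(6,8)] by (simp add: h_def)
  have "contour_integral \<gamma> h = 2 * pi * \<i> * (\<Sum>w\<in>W. winding_number \<gamma> w * residue h w)"
    using Residue_theorem[OF assms(1-3) holo[OF order_refl] assms(6-9)] by (simp add: h_def)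
  also have "\<dots> = 2 * pi * \<i> * (\<Sum>w\<in>W. winding_number \<gamma> w * (c * gset c {w} (W - {w}) * f w))"
    using residue by simp
  finally show ?thesis
    using has_contour_integral_integral[OF integrable] unfolding h_def by simp
qed

lemma sum_lists_length_Suc:
  assumes "finite A"
  shows "(\<Sum>ys | set ys \<subseteq> A \<and> length ys = Suc k. f ys) =
    (\<Sum>xs | set xs \<subseteq> A \<and> length xs = k. \<Sum>a\<in>A. f (xs @ [a]))"
proof -
  have "inj_on (\<lambda>(xs, a). xs @ [a]) ({xs. set xs \<subseteq> A \<and> length xs = k} \<times> A)"
    by (auto simp: inj_on_def)
  moreover have "(\<lambda>(xs, a). xs @ [a]) ` ({xs. set xs \<subseteq> A \<and> length xs = k} \<times> A) =
      {ys. set ys \<subseteq> A \<and> length ys = Suc k}"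
    by (force simp: length_Suc_conv_rev)
  ultimately have "bij_betw (\<lambda>(xs, a). xs @ [a]) ({xs. set xs \<subseteq> A \<and> length xs = k} \<times> A)
      {ys. set ys \<subseteq> A \<and> length ys = Suc k}"
    by (simp add: bij_betw_def)
  from sum.reindex_bij_betw[OF this, of f] show ?thesis
    by (simp add: sum.cartesian_product case_prod_unfold)
qed

lemma cint_iter_glist:
  assumes S: "open S" "connected S" "finite W" "W \<subseteq> S"
    and paths: "\<And>j. j < k \<Longrightarrow> valid_path (gam j) \<and> pathfinish (gam j) = pathstart (gam j)
                 \<and> path_image (gam j) \<subseteq> S - W
                 \<and> (\<forall>w\<in>W. winding_number (gam j) w = 1)
                 \<and> (\<forall>x. x \<notin> S \<longrightarrow> winding_number (gam j) x = 0)"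
    and holo: "\<And>xs j. length xs = k \<Longrightarrow> set xs \<subseteq> S \<Longrightarrow> j < k \<Longrightarrow>
                 (\<lambda>x. G (xs[j := x])) holomorphic_on S"
  shows "cint_iter gam k (\<lambda>xs. glist c xs W * G xs) = (2 * pi * \<i>) ^ k *
    (\<Sum>xs | set xs \<subseteq> W \<and> length xs = k.
       (\<Prod>j<length xs. c * gset c {xs ! j} (W - {xs ! j})) * G xs)"
  using paths holo
proof (induction k arbitrary: G)
  case 0
  have "{xs. set xs \<subseteq> W \<and> length xs = 0} = {[]}"
    by auto
  then show ?case
    by simp
next
  case (Suc k)
  let ?R = "\<lambda>xs. \<Prod>j<length xs. c * gset c {xs ! j} (W - {xs ! j})"
  let ?L = "{xs. set xs \<subseteq> W \<and> length xs = k}"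
  have path: "valid_path (gam k)" "pathfinish (gam k) = pathstart (gam k)"
    "path_image (gam k) \<subseteq> S - W" "\<forall>w\<in>W. winding_number (gam k) w = 1"
    "\<forall>x. x \<notin> S \<longrightarrow> winding_number (gam k) x = 0"
    using Suc.prems(1)[of k] by auto
  have inner: "cint_iter gam k (\<lambda>xs. glist c (xs @ [x]) W * G (xs @ [x])) =
      (2 * pi * \<i>) ^ k * (\<Sum>xs\<in>?L. ?R xs * (gset c {x} W * G (xs @ [x])))"
    if "x \<in> path_image (gam k)" for x
  proof -
    have "x \<in> S"
      using that path(3) by auto
    have "cint_iter gam k (\<lambda>xs. glist c xs W * (gset c {x} W * G (xs @ [x]))) =
        (2 * pi * \<i>) ^ k * (\<Sum>xs\<in>?L. ?R xs * (gset c {x} W * G (xs @ [x])))"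
    proof (rule Suc.IH)
      fix xs j
      assume "length xs = k" "set xs \<subseteq> S" "j < k"
      then have "(\<lambda>y. G ((xs @ [x])[j := y])) holomorphic_on S"
        using Suc.prems(2)[of "xs @ [x]" j] \<open>x \<in> S\<close> by simp
      then show "(\<lambda>y. gset c {x} W * G (xs[j := y] @ [x])) holomorphic_on S"
        using \<open>j < k\<close> \<open>length xs = k\<close> by (auto intro: holomorphic_intros simp: list_update_append1)
    qed (use Suc.prems(1) in auto)
    then show ?thesis
      by (simp add: glist_snoc mult.assoc)
  qed
  have outer: "((\<lambda>x. (2 * pi * \<i>) ^ k * (\<Sum>xs\<in>?L. ?R xs * (gset c {x} W * G (xs @ [x]))))
      has_contour_integral (2 * pi * \<i>) ^ k * (\<Sum>xs\<in>?L. ?R xs *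
        (2 * pi * \<i> * (\<Sum>w\<in>W. c * gset c {w} (W - {w}) * G (xs @ [w]))))) (gam k)"
  proof (intro has_contour_integral_lmul has_contour_integral_sum)
    fix xs
    assume "xs \<in> ?L"
    then have "(\<lambda>y. G ((xs @ [pathstart (gam k)])[k := y])) holomorphic_on S"
      using Suc.prems(2)[of "xs @ [pathstart (gam k)]" k] path(3) S(4) by auto
    then have "(\<lambda>x. G (xs @ [x])) holomorphic_on S"
      using \<open>xs \<in> ?L\<close> by (simp add: list_update_append)
    from has_contour_integral_gset_simple_poles[OF S this path(1-3,5)]
    show "((\<lambda>x. gset c {x} W * G (xs @ [x])) has_contour_integral
        2 * pi * \<i> * (\<Sum>w\<in>W. c * gset c {w} (W - {w}) * G (xs @ [w]))) (gam k)"
      using path(4) by simp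
  qed (simp_all add: finite_lists_length_eq S(3))
  have snoc: "?R (xs @ [w]) = ?R xs * (c * gset c {w} (W - {w}))" for xs w
    by (simp add: nth_append)
  have "cint_iter gam (Suc k) (\<lambda>xs. glist c xs W * G xs) =
      contour_integral (gam k) (\<lambda>x. (2 * pi * \<i>) ^ k * (\<Sum>xs\<in>?L. ?R xs * (gset c {x} W * G (xs @ [x]))))"
    by (simp add: inner cong: contour_integral_cong)
  also have "\<dots> = (2 * pi * \<i>) ^ Suc k * (\<Sum>xs\<in>?L. \<Sum>w\<in>W. ?R (xs @ [w]) * G (xs @ [w]))"
    unfolding contour_integral_unique[OF outer] snoc
    by (simp add: sum_distrib_left mult_ac)
  also have "\<dots> = (2 * pi * \<i>) ^ Suc k *
      (\<Sum>ys | set ys \<subseteq> W \<and> length ys = Suc k. ?R ys * G ys)"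
    by (simp add: sum_lists_length_Suc S(3))
  finally show ?case .
qed

lemma sum_lists_distinct_eq_sum_subsets:
  fixes h :: "'a list \<Rightarrow> 'b::semiring_1"
  assumes "finite A"
    and nondistinct: "\<And>xs. set xs \<subseteq> A \<Longrightarrow> length xs = n \<Longrightarrow> \<not> distinct xs \<Longrightarrow> h xs = 0"
    and distinct: "\<And>xs. set xs \<subseteq> A \<Longrightarrow> length xs = n \<Longrightarrow> distinct xs \<Longrightarrow> h xs = H (set xs)"
  shows "(\<Sum>xs | set xs \<subseteq> A \<and> length xs = n. h xs) =
    of_nat (fact n) * (\<Sum>I | I \<subseteq> A \<and> card I = n. H I)"
proof -
  let ?D = "{xs. set xs \<subseteq> A \<and> length xs = n \<and> distinct xs}"
  let ?T = "{I. I \<subseteq> A \<and> card I = n}"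
  have "finite ?D"
    by (rule finite_subset[OF _ finite_lists_length_eq[OF assms(1), of n]]) auto
  have fibre: "{xs \<in> ?D. set xs = I} = permutations_of_set I" if "I \<in> ?T" for I
    using that by (auto simp: permutations_of_set_def distinct_card)
  have "(\<Sum>xs | set xs \<subseteq> A \<and> length xs = n. h xs) = (\<Sum>xs\<in>?D. h xs)"
    by (rule sum.mono_neutral_right) (auto simp: finite_lists_length_eq assms(1) nondistinct)
  also have "\<dots> = (\<Sum>I\<in>?T. \<Sum>xs | xs \<in> ?D \<and> set xs = I. h xs)"
    by (rule sum.group[symmetric]) (use \<open>finite ?D\<close> assms(1) in \<open>auto simp: distinct_card\<close>)
  also have "\<dots> = (\<Sum>I\<in>?T. of_nat (fact n) * H I)"
  proof (rule sum.cong[OF refl])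
    fix I
    assume I: "I \<in> ?T"
    then have "finite I"
      using assms(1) finite_subset by blast
    have "(\<Sum>xs | xs \<in> ?D \<and> set xs = I. h xs) = (\<Sum>xs\<in>permutations_of_set I. H I)"
      unfolding fibre[OF I] using I
      by (intro sum.cong refl) (auto simp: permutations_of_set_def distinct distinct_card[symmetric])
    then show "(\<Sum>xs | xs \<in> ?D \<and> set xs = I. h xs) = of_nat (fact n) * H I"
      using I \<open>finite I\<close> by simp
  qed
  finally show ?thesis
    by (simp add: sum_distrib_left)
qed

lemma symmetric_at_some_enumeration:
  assumes "\<And>xs ys. length xs = n \<Longrightarrow> mset ys = mset xs \<Longrightarrow> F ys = F xs"
    and "distinct xs" "length xs = n"
  shows "F (SOME ys. distinct ys \<and> set ys = set xs) = F xs"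
proof -
  have "distinct (SOME ys. distinct ys \<and> set ys = set xs) \<and> set (SOME ys. distinct ys \<and> set ys = set xs) = set xs"
    by (rule someI[of _ xs]) (simp add: assms(2))
  then have "mset (SOME ys. distinct ys \<and> set ys = set xs) = mset xs"
    using assms(2) set_eq_iff_mset_eq_distinct by blast
  then show ?thesis
    by (rule assms(1)[OF assms(3)])
qed

theorem propositionB1:
  fixes c :: complex and W :: "complex set" and n :: nat
    and F :: "complex list \<Rightarrow> complex" and S :: "complex set"
    and gam :: "nat \<Rightarrow> real \<Rightarrow> complex"
  assumes "c \<noteq> 0"
    and "finite W" and "n \<le> card W"
    and "open S" and "connected S" and "W \<subseteq> S"
    and symm: "\<And>xs ys. length xs = n \<Longrightarrow> mset ys = mset xs \<Longrightarrow> F ys = F xs"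
    and holo: "\<And>xs j. length xs = n \<Longrightarrow> set xs \<subseteq> S \<Longrightarrow> j < n \<Longrightarrow>
                 (\<lambda>x. F (xs[j := x])) holomorphic_on S"
    and paths: "\<And>j. j < n \<Longrightarrow> valid_path (gam j) \<and> pathfinish (gam j) = pathstart (gam j)
                 \<and> path_image (gam j) \<subseteq> S - W
                 \<and> (\<forall>w\<in>W. winding_number (gam j) w = 1)
                 \<and> (\<forall>x. x \<notin> S \<longrightarrow> winding_number (gam j) x = 0)"
  shows "bracket c W n gam F =
    (\<Sum>I | I \<subseteq> W \<and> card I = n.
        gset c I (W - I) * F (SOME xs. distinct xs \<and> set xs = I))"
proof -
  let ?R = "\<lambda>xs. \<Prod>j<length xs. c * gset c {xs ! j} (W - {xs ! j})"
  let ?Q = "\<lambda>zs. inverse (Delta c zs * Delta' c zs) * F zs"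
  have "bracket c W n gam F =
      1 / ((2 * pi * \<i> * c) ^ n * of_nat (fact n)) * cint_iter gam n (\<lambda>zs. glist c zs W * ?Q zs)"
    unfolding bracket_def by (simp add: divide_inverse mult.assoc)
  also have "cint_iter gam n (\<lambda>zs. glist c zs W * ?Q zs) = (2 * pi * \<i>) ^ n *
      (\<Sum>xs | set xs \<subseteq> W \<and> length xs = n. ?R xs * ?Q xs)"
    by (intro cint_iter_glist[OF assms(4,5,2,6) paths] holomorphic_on_mult
        holomorphic_on_inverse_Delta_mult_Delta' holo) simp_all
  also have "(\<Sum>xs | set xs \<subseteq> W \<and> length xs = n. ?R xs * ?Q xs) = of_nat (fact n) *
      (\<Sum>I | I \<subseteq> W \<and> card I = n. c ^ n * gset c I (W - I) * F (SOME xs. distinct xs \<and> set xs = I))"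
  proof (rule sum_lists_distinct_eq_sum_subsets[OF \<open>finite W\<close>])
    fix xs :: "complex list"
    assume xs: "set xs \<subseteq> W"
    have "?R xs * ?Q xs = (if distinct xs then c ^ length xs * gset c (set xs) (W - set xs) else 0) * F xs"
      by (simp only: mult.assoc[symmetric]
          prod_residues_mult_inverse_Delta_mult_Delta'[OF \<open>c \<noteq> 0\<close> \<open>finite W\<close> xs])
    then show "\<not> distinct xs \<Longrightarrow> ?R xs * ?Q xs = 0"
      and "length xs = n \<Longrightarrow> distinct xs \<Longrightarrow>
        ?R xs * ?Q xs = c ^ n * gset c (set xs) (W - set xs) * F (SOME ys. distinct ys \<and> set ys = set xs)"
      by (simp_all add: symmetric_at_some_enumeration[of n F xs, OF symm] del: gset_singleton)
  qed
  also have "(2 * pi * \<i>) ^ n * (of_nat (fact n) * (\<Sum>I | I \<subseteq> W \<and> card I = n.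
      c ^ n * gset c I (W - I) * F (SOME xs. distinct xs \<and> set xs = I))) =
      (2 * pi * \<i> * c) ^ n * of_nat (fact n) *
      (\<Sum>I | I \<subseteq> W \<and> card I = n. gset c I (W - I) * F (SOME xs. distinct xs \<and> set xs = I))"
    by (simp add: sum_distrib_left power_mult_distrib mult_ac)
  finally show ?thesis
    using \<open>c \<noteq> 0\<close> by simp
qed

end
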